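(* Let $a,\varepsilon\in\mathbb{R}$ and consider the piecewise smooth vector field on $\mathbb{R}^3$ $$Z(x,y,z)=\begin{cases}X_-(x,y,z), & x^2+y^2+z^2\le 1,\\ X_+(x,y,z), & x^2+y^2+z^2\ge 1,\end{cases}$$ with $X_-(x,y,z)=(y,\,-ay+x+az+\varepsilon,\,x)$ and $X_+(x,y,z)=(y,\,-ay-x-az+\varepsilon,\,x)$, with dynamics on the unit sphere $S^2$ given by Filippov's convention. (This is the first-order form, with $x=\dot z$, $y=\ddot z$, of $\dddot{z}+a\ddot{z}+b\dot{z}+abz=\varepsilon$ with $b=\mathrm{sign}(z^2+\dot z^2+\ddot z^2-1)$.) If $$\frac{|a|}{\sqrt{2}}<\varepsilon<|a| \quad\text{or}\quad -|a|<\varepsilon<-\frac{|a|}{\sqrt{2}},$$ then the system admits a pseudo-orbit.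
   Context: Write $h(x,y,z)=x^2+y^2+z^2-1$, so $S^2=h^{-1}(0)$ is the discontinuity surface. Let $\varphi_\pm(t,p)$ denote the flow of the smooth vector field $X_\pm$ (extended to all of $\mathbb{R}^3$) starting at $p$. For a vector field $X$, $Xh(p)=\langle X(p),\nabla h(p)\rangle$; a point $p\in S^2$ with $X_+h(p)=0$ or $X_-h(p)=0$ is a tangency point. A pseudo-orbit (closed pseudo-trajectory) of $Z$ means a closed curve formed by two trajectory arcs meeting $S^2$ in exactly two distinct points $P,Q$: there exist nonzero times $t_-,t_+$ of the same sign with $\varphi_-(t_-,P)=Q$, $\varphi_+(t_+,P)=Q$, such that $\varphi_-(t,P)$ lies in the open unit ball for all $t$ strictly between $0$ and $t_-$, and $\varphi_+(t,P)$ lies outside the closed unit ball for all $t$ strictly between $0$ and $t_+$. *)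

theory Defs
  imports "HOL-Analysis.Analysis"
begin

type_synonym pt = "real \<times> real \<times> real"

definition h :: "pt \<Rightarrow> real" where
  "h p = (case p of (x, y, z) \<Rightarrow> x^2 + y^2 + z^2 - 1)"

definition Xminus :: "real \<Rightarrow> real \<Rightarrow> pt \<Rightarrow> pt" where
  "Xminus a \<epsilon> p = (case p of (x, y, z) \<Rightarrow> (y, - a * y + x + a * z + \<epsilon>, x))"

definition Xplus :: "real \<Rightarrow> real \<Rightarrow> pt \<Rightarrow> pt" where
  "Xplus a \<epsilon> p = (case p of (x, y, z) \<Rightarrow> (y, - a * y - x - a * z + \<epsilon>, x))"

definition flow :: "(pt \<Rightarrow> pt) \<Rightarrow> real \<Rightarrow> pt \<Rightarrow> pt" where
  "flow X t p = (THE \<gamma>. \<gamma> 0 = p \<and> (\<forall>s. (\<gamma> has_vector_derivative X (\<gamma> s)) (at s))) t"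

definition between0 :: "real \<Rightarrow> real \<Rightarrow> bool" where
  "between0 t s \<longleftrightarrow> (0 < s \<and> s < t) \<or> (t < s \<and> s < 0)"

definition has_pseudo_orbit :: "(pt \<Rightarrow> pt) \<Rightarrow> (pt \<Rightarrow> pt) \<Rightarrow> bool" where
  "has_pseudo_orbit Xm Xp \<longleftrightarrow>
     (\<exists>P Q tm tp. h P = 0 \<and> h Q = 0 \<and> P \<noteq> Q \<and> tm \<noteq> 0 \<and> tp \<noteq> 0 \<and>
        ((tm > 0 \<and> tp > 0) \<or> (tm < 0 \<and> tp < 0)) \<and>
        flow Xm tm P = Q \<and> flow Xp tp P = Q \<and>
        (\<forall>t. between0 tm t \<longrightarrow> h (flow Xm t P) < 0) \<and>
        (\<forall>t. between0 tp t \<longrightarrow> h (flow Xp t P) > 0))"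

end

theory Submission
  imports Defs
begin

(* Put c = \<epsilon> / a, so that the hypothesis reads 1/2 < c^2 < 1, and write c^2 (1 + r^2) = 1
  with 0 < r < 1. Both fields are affine, so their flows are unique and can be written down:
  the X_- orbit through P = (-c r, c, 0) is hyperbolic and keeps z - y = -c, the X_+ orbit is
  circular and keeps y + z = c. Both reach the mirror point Q = (c r, c, 0), at the times
  2 artanh r and 2 arctan r respectively. Along the X_- arc h factors as (y - c)(3 y + c),
  which is negative before the return time; along the X_+ arc h = z^2, which only vanishes
  at the return time. *)

lemma nonpos_if_deriv_le_linear:
  fixes g g' :: "real \<Rightarrow> real"
  assumes "g 0 = 0" and "\<And>s. (g has_real_derivative g' s) (at s)"
    and "\<And>s. g' s \<le> K * g s" and "0 \<le> t"
  shows "g t \<le> 0"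
proof -
  define k where "k s = exp (- K * s) * g s" for s
  have "k t \<le> k 0"
  proof (rule DERIV_nonpos_imp_nonincreasing[OF \<open>0 \<le> t\<close>])
    fix s
    have "(k has_real_derivative exp (- K * s) * (g' s - K * g s)) (at s)"
      unfolding k_def by (auto intro!: derivative_eq_intros assms(2) simp: algebra_simps)
    moreover have "exp (- K * s) * (g' s - K * g s) \<le> 0"
      using assms(3)[of s] by (simp add: mult_nonneg_nonpos)
    ultimately show "\<exists>y. (k has_real_derivative y) (at s) \<and> y \<le> 0" by blast
  qed
  then show ?thesis using assms(1) by (simp add: k_def mult_le_0_iff)
qed

lemma zero_if_abs_deriv_le_linear:
  fixes g g' :: "real \<Rightarrow> real"
  assumes "g 0 = 0" and "\<And>s. 0 \<le> g s" and "\<And>s. (g has_real_derivative g' s) (at s)"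
    and "\<And>s. \<bar>g' s\<bar> \<le> K * g s"
  shows "g t = 0"
proof (cases "0 \<le> t")
  case True
  have "g t \<le> 0"
    using assms(1,3) abs_le_D1[OF assms(4)] True by (rule nonpos_if_deriv_le_linear)
  then show ?thesis using assms(2)[of t] by simp
next
  case False
  have "(\<lambda>s. g (- s)) (- t) \<le> 0"
  proof (rule nonpos_if_deriv_le_linear
      [where g = "\<lambda>s. g (- s)" and g' = "\<lambda>s. - g' (- s)" and K = K])
    show "((\<lambda>s. g (- s)) has_real_derivative - g' (- s)) (at s)" for s
      using assms(3)[of "- s"] by (simp add: DERIV_mirror)
    show "- g' (- s) \<le> K * g (- s)" for s
      using assms(4)[of "- s"] by linarith
  qed (use assms False in auto)
  then show ?thesis using assms(2)[of t] by simp
qed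

lemma lipschitz_ode_solutions_unique:
  fixes X :: "'a::real_inner \<Rightarrow> 'a"
  assumes X: "L-lipschitz_on UNIV X"
    and \<gamma>\<^sub>1: "\<And>s. (\<gamma>\<^sub>1 has_vector_derivative X (\<gamma>\<^sub>1 s)) (at s)"
    and \<gamma>\<^sub>2: "\<And>s. (\<gamma>\<^sub>2 has_vector_derivative X (\<gamma>\<^sub>2 s)) (at s)"
    and "\<gamma>\<^sub>1 0 = \<gamma>\<^sub>2 0"
  shows "\<gamma>\<^sub>1 t = \<gamma>\<^sub>2 t"
proof -
  define d where "d s = \<gamma>\<^sub>1 s - \<gamma>\<^sub>2 s" for s
  define d' where "d' s = X (\<gamma>\<^sub>1 s) - X (\<gamma>\<^sub>2 s)" for s
  have deriv: "((\<lambda>s. d s \<bullet> d s) has_real_derivative 2 * (d s \<bullet> d' s)) (at s)" for s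
  proof -
    have "(d has_vector_derivative d' s) (at s)"
      unfolding d_def d'_def by (intro has_vector_derivative_diff \<gamma>\<^sub>1 \<gamma>\<^sub>2)
    then show ?thesis
      by (auto intro!: derivative_eq_intros simp: has_real_derivative_iff_has_vector_derivative
          has_vector_derivative_def inner_commute)
  qed
  have bound: "\<bar>2 * (d s \<bullet> d' s)\<bar> \<le> 2 * L * (d s \<bullet> d s)" for s
  proof -
    have "\<bar>d s \<bullet> d' s\<bar> \<le> norm (d s) * norm (d' s)" by (rule Cauchy_Schwarz_ineq2)
    also have "\<dots> \<le> norm (d s) * (L * norm (d s))"
      using lipschitz_onD[OF X, of "\<gamma>\<^sub>1 s" "\<gamma>\<^sub>2 s"]
      by (intro mult_left_mono) (auto simp: d_def d'_def dist_norm)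
    also have "\<dots> = L * (d s \<bullet> d s)"
      by (simp add: power2_norm_eq_inner[symmetric] power2_eq_square)
    finally show ?thesis by simp
  qed
  have "d t \<bullet> d t = 0"
    by (rule zero_if_abs_deriv_le_linear[OF _ _ deriv bound]) (simp_all add: d_def assms)
  then show ?thesis by (simp add: d_def)
qed

lemma flow_eqI:
  assumes "L-lipschitz_on UNIV X" and "\<And>s. (\<gamma> has_vector_derivative X (\<gamma> s)) (at s)"
  shows "flow X t (\<gamma> 0) = \<gamma> t"
proof -
  have "(THE \<gamma>'. \<gamma>' 0 = \<gamma> 0 \<and> (\<forall>s. (\<gamma>' has_vector_derivative X (\<gamma>' s)) (at s))) = \<gamma>"
  proof (rule the_equality)
    show "\<gamma> 0 = \<gamma> 0 \<and> (\<forall>s. (\<gamma> has_vector_derivative X (\<gamma> s)) (at s))"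
      using assms(2) by blast
  next
    fix \<gamma>' assume "\<gamma>' 0 = \<gamma> 0 \<and> (\<forall>s. (\<gamma>' has_vector_derivative X (\<gamma>' s)) (at s))"
    then show "\<gamma>' = \<gamma>"
      using lipschitz_ode_solutions_unique[OF assms(1) _ assms(2)] by blast
  qed
  then show ?thesis by (simp add: flow_def)
qed

lemma lipschitz_on_affine:
  assumes "bounded_linear M"
  obtains L where "L-lipschitz_on U (\<lambda>u. M u + b)"
proof -
  obtain B where "B-lipschitz_on U M"
    using bounded_linear.lipschitz_boundE[OF assms] by blast
  then have "(B + 0)-lipschitz_on U (\<lambda>u. M u + b)"
    by (rule lipschitz_on_add[OF _ lipschitz_on_constant])
  then show ?thesis ..
qed

lemma lipschitz_companion_field:
  fixes X :: "pt \<Rightarrow> pt"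
  assumes "\<And>x y z. X (x, y, z) = (y, \<alpha> * y + \<beta> * x + \<gamma> * z + \<epsilon>, x)"
  obtains L where "L-lipschitz_on UNIV X"
proof -
  define M :: "pt \<Rightarrow> pt" where "M = (\<lambda>(x, y, z). (y, \<alpha> * y + \<beta> * x + \<gamma> * z, x))"
  have "linear M" by (rule linearI) (auto simp: M_def algebra_simps split: prod.splits)
  then have "bounded_linear M" by (simp add: linear_conv_bounded_linear)
  moreover have "X = (\<lambda>u. M u + (0, \<epsilon>, 0))"
    by (auto simp: assms M_def fun_eq_iff)
  ultimately show ?thesis using lipschitz_on_affine that by metis
qed

lemma has_vector_derivative_triple:
  assumes "(f has_real_derivative f') (at t)" and "(g has_real_derivative g') (at t)"
    and "(k has_real_derivative k') (at t)"
  shows "((\<lambda>s. (f s, g s, k s)) has_vector_derivative (f', g', k')) (at t)"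
  using assms
  by (auto intro!: has_vector_derivative_Pair simp: has_real_derivative_iff_has_vector_derivative)

definition orbit_minus :: "real \<Rightarrow> real \<Rightarrow> real \<Rightarrow> pt" where
  "orbit_minus q c t =
     (q * cosh t + c * sinh t, c * cosh t + q * sinh t, c * cosh t + q * sinh t - c)"

definition orbit_plus :: "real \<Rightarrow> real \<Rightarrow> real \<Rightarrow> pt" where
  "orbit_plus q c t = (q * cos t + c * sin t, c * cos t - q * sin t, c - c * cos t + q * sin t)"

lemma flow_Xminus:
  assumes "a * c = \<epsilon>"
  shows "flow (Xminus a \<epsilon>) t (q, c, 0) = orbit_minus q c t"
proof -
  obtain L where "L-lipschitz_on UNIV (Xminus a \<epsilon>)"
    by (rule lipschitz_companion_field[of "Xminus a \<epsilon>" "- a" 1 a \<epsilon>]) (simp add: Xminus_def)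
  moreover have "(orbit_minus q c has_vector_derivative Xminus a \<epsilon> (orbit_minus q c s)) (at s)" for s
  proof -
    have "((\<lambda>s. (q * cosh s + c * sinh s, c * cosh s + q * sinh s, c * cosh s + q * sinh s - c))
        has_vector_derivative
          (q * sinh s + c * cosh s, c * sinh s + q * cosh s, c * sinh s + q * cosh s)) (at s)"
      by (intro has_vector_derivative_triple) (auto intro!: derivative_eq_intros)
    moreover have "Xminus a \<epsilon> (orbit_minus q c s) =
        (q * sinh s + c * cosh s, c * sinh s + q * cosh s, c * sinh s + q * cosh s)"
      using assms by (simp add: Xminus_def orbit_minus_def algebra_simps)
    ultimately show ?thesis by (simp add: orbit_minus_def[abs_def])
  qed
  ultimately have "flow (Xminus a \<epsilon>) t (orbit_minus q c 0) = orbit_minus q c t"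
    by (rule flow_eqI)
  then show ?thesis by (simp add: orbit_minus_def)
qed

lemma flow_Xplus:
  assumes "a * c = \<epsilon>"
  shows "flow (Xplus a \<epsilon>) t (q, c, 0) = orbit_plus q c t"
proof -
  obtain L where "L-lipschitz_on UNIV (Xplus a \<epsilon>)"
    by (rule lipschitz_companion_field[of "Xplus a \<epsilon>" "- a" "- 1" "- a" \<epsilon>]) (simp add: Xplus_def)
  moreover have "(orbit_plus q c has_vector_derivative Xplus a \<epsilon> (orbit_plus q c s)) (at s)" for s
  proof -
    have "((\<lambda>s. (q * cos s + c * sin s, c * cos s - q * sin s, c - c * cos s + q * sin s))
        has_vector_derivative
          (c * cos s - q * sin s, - (q * cos s + c * sin s), q * cos s + c * sin s)) (at s)"
      by (intro has_vector_derivative_triple) (auto intro!: derivative_eq_intros)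
    moreover have "Xplus a \<epsilon> (orbit_plus q c s) =
        (c * cos s - q * sin s, - (q * cos s + c * sin s), q * cos s + c * sin s)"
      using assms by (simp add: Xplus_def orbit_plus_def algebra_simps)
    ultimately show ?thesis by (simp add: orbit_plus_def[abs_def])
  qed
  ultimately have "flow (Xplus a \<epsilon>) t (orbit_plus q c 0) = orbit_plus q c t"
    by (rule flow_eqI)
  then show ?thesis by (simp add: orbit_plus_def)
qed

lemma h_orbit_minus:
  assumes "q\<^sup>2 + c\<^sup>2 = 1"
  shows "h (orbit_minus q c t) =
    (c * cosh t + q * sinh t - c) * (3 * (c * cosh t + q * sinh t) + c)"
  using assms cosh_square_eq[of t] unfolding h_def orbit_minus_def prod.case by algebra

lemma h_orbit_plus:
  assumes "q\<^sup>2 + c\<^sup>2 = 1"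
  shows "h (orbit_plus q c t) = (c - c * cos t + q * sin t)\<^sup>2"
  using assms sin_cos_squared_add[of t] unfolding h_def orbit_plus_def prod.case by algebra

lemma orbit_minus_return:
  assumes "\<bar>r\<bar> < 1"
  shows "orbit_minus (- (c * r)) c (2 * artanh r) = (c * r, c, 0)"
proof -
  define T where "T = 2 * artanh r"
  have "0 < 1 - r" and "0 < 1 + r" using assms by auto
  then have "(1 - r) * exp T = 1 + r" and "(1 + r) * exp (- T) = 1 - r"
    by (simp_all add: T_def artanh_def exp_minus)
  moreover have "2 * cosh T = exp T + exp (- T)" and "2 * sinh T = exp T - exp (- T)"
    by (simp_all add: cosh_field_def sinh_field_def)
  ultimately have "(1 - r) * (1 + r) * (- c * r * cosh T + c * sinh T) = (1 - r) * (1 + r) * (c * r)"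
    and "(1 - r) * (1 + r) * (c * cosh T - c * r * sinh T) = (1 - r) * (1 + r) * c"
    by algebra+
  then show ?thesis
    using \<open>0 < 1 - r\<close> \<open>0 < 1 + r\<close> by (simp add: orbit_minus_def T_def[symmetric])
qed

lemma orbit_plus_return: "orbit_plus (- (c * r)) c (2 * arctan r) = (c * r, c, 0)"
proof -
  define T where "T = 2 * arctan r"
  have "0 < 1 + r\<^sup>2" by (simp add: add_pos_nonneg)
  have "cos T = (cos (arctan r))\<^sup>2 - (sin (arctan r))\<^sup>2" and "sin T = 2 * sin (arctan r) * cos (arctan r)"
    unfolding T_def by (rule cos_double, rule sin_double)
  then have cos: "(1 + r\<^sup>2) * cos T = 1 - r\<^sup>2" and sin: "(1 + r\<^sup>2) * sin T = 2 * r"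
    using \<open>0 < 1 + r\<^sup>2\<close> by (simp_all add: cos_arctan sin_arctan power_divide field_simps)
  have "(1 + r\<^sup>2) * (- c * r * cos T + c * sin T) = (1 + r\<^sup>2) * (c * r)"
    and "(1 + r\<^sup>2) * (c * cos T + c * r * sin T) = (1 + r\<^sup>2) * c"
    using cos sin by algebra+
  then show ?thesis
    using \<open>0 < 1 + r\<^sup>2\<close> by (simp add: orbit_plus_def T_def[symmetric])
qed

lemma cosh_minus_one_less_sinh:
  fixes r t :: real
  assumes "0 < r" and "r < 1" and "0 < t" and "t < 2 * artanh r"
  shows "cosh t - 1 < r * sinh t"
proof -
  define u where "u = exp t"
  have "1 < u" using assms(3) by (simp add: u_def)
  moreover have "(1 - r) * u < 1 + r"
  proof -
    have "u < exp (ln ((1 + r) / (1 - r)))" using assms(4) by (simp add: u_def artanh_def)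
    also have "\<dots> = (1 + r) / (1 - r)" using assms(1,2) by simp
    finally show ?thesis using assms(2) by (simp add: field_simps)
  qed
  moreover have "2 * u * (cosh t - 1 - r * sinh t) = (u - 1) * ((1 - r) * u - (1 + r))"
  proof -
    have cosh: "cosh t = (u + inverse u) / 2" and sinh: "sinh t = (u - inverse u) / 2"
      by (simp_all add: u_def cosh_def sinh_def exp_minus)
    have "u \<noteq> 0" by (simp add: u_def)
    then show ?thesis unfolding cosh sinh by (simp add: field_simps)
  qed
  ultimately have "2 * u * (cosh t - 1 - r * sinh t) < 0"
    by (simp add: mult_pos_neg)
  moreover have "0 < 2 * u" by (simp add: u_def)
  ultimately show ?thesis by (simp add: mult_less_0_iff)
qed

lemma one_minus_cos_less_sin:
  fixes r t :: real
  assumes "0 < t" and "t < 2 * arctan r"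
  shows "1 - cos t < r * sin t"
proof -
  define s where "s = t / 2"
  have s: "0 < s" "s < arctan r" "s < pi / 2"
    using assms arctan_ubound[of r] by (simp_all add: s_def)
  have "0 < sin s"
    using s by (intro sin_gt_zero) simp_all
  have "0 < cos s"
    using s by (intro cos_gt_zero) simp_all
  have "tan s < r"
    using s arctan_tan[of s] arctan_less_iff[of "tan s" r] by simp
  then have "sin s < r * cos s"
    using \<open>0 < cos s\<close> by (simp add: tan_def divide_less_eq)
  then have "2 * (sin s)\<^sup>2 < r * (2 * sin s * cos s)"
    using \<open>0 < sin s\<close> by (simp add: power2_eq_square)
  then show ?thesis
    using cos_double_sin[of s] sin_double[of s] by (simp add: s_def)
qed

lemma h_orbit_minus_neg:
  assumes "c\<^sup>2 * (1 + r\<^sup>2) = 1" and "0 < r" and "r < 1"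
    and "0 < t" and "t < 2 * artanh r"
  shows "h (orbit_minus (- (c * r)) c t) < 0"
proof -
  have "(- (c * r))\<^sup>2 + c\<^sup>2 = 1" using assms(1) by (simp add: algebra_simps power_mult_distrib)
  then have h: "h (orbit_minus (- (c * r)) c t) =
      c\<^sup>2 * ((cosh t - 1 - r * sinh t) * (3 * (cosh t - r * sinh t) + 1))"
    by (simp add: h_orbit_minus power2_eq_square algebra_simps)
  have "r * sinh t < cosh t"
  proof -
    have "r * sinh t < 1 * sinh t"
      using assms(3,4) by (intro mult_strict_right_mono) simp_all
    then show ?thesis using sinh_less_cosh_real[of t] by simp
  qed
  moreover have "cosh t - 1 - r * sinh t < 0"
    using cosh_minus_one_less_sinh[OF assms(2-5)] by simp
  moreover have "c \<noteq> 0" using assms(1) by auto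
  ultimately show ?thesis
    unfolding h by (intro mult_pos_neg mult_neg_pos) simp_all
qed

lemma h_orbit_plus_pos:
  assumes "c\<^sup>2 * (1 + r\<^sup>2) = 1" and "0 < t" and "t < 2 * arctan r"
  shows "0 < h (orbit_plus (- (c * r)) c t)"
proof -
  have "(- (c * r))\<^sup>2 + c\<^sup>2 = 1" using assms(1) by (simp add: algebra_simps power_mult_distrib)
  then have "h (orbit_plus (- (c * r)) c t) = c\<^sup>2 * (1 - cos t - r * sin t)\<^sup>2"
    by (simp add: h_orbit_plus power2_eq_square algebra_simps)
  moreover have "1 - cos t - r * sin t \<noteq> 0"
    using one_minus_cos_less_sin[OF assms(2,3)] by simp
  moreover have "c \<noteq> 0" using assms(1) by auto
  ultimately show ?thesis by simp
qed

lemma has_pseudo_orbitI: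
  assumes "a * c = \<epsilon>" and "c\<^sup>2 * (1 + r\<^sup>2) = 1" and "0 < r" and "r < 1"
  shows "has_pseudo_orbit (Xminus a \<epsilon>) (Xplus a \<epsilon>)"
proof -
  define P where "P = (- (c * r), c, 0 :: real)"
  define Q where "Q = (c * r, c, 0 :: real)"
  define t_minus where "t_minus = 2 * artanh r"
  define t_plus where "t_plus = 2 * arctan r"
  have "c \<noteq> 0" using assms(2) by auto
  have "h P = 0" and "h Q = 0"
    using assms(2) by (simp_all add: h_def P_def Q_def algebra_simps power_mult_distrib)
  moreover have "P \<noteq> Q" using \<open>c \<noteq> 0\<close> assms(3) by (simp add: P_def Q_def)
  moreover have "0 < t_minus" and "0 < t_plus"
    using assms(3,4) by (simp_all add: t_minus_def t_plus_def artanh_def)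
  moreover have "flow (Xminus a \<epsilon>) t_minus P = Q" and "flow (Xplus a \<epsilon>) t_plus P = Q"
  proof -
    have "\<bar>r\<bar> < 1" using assms(3,4) by simp
    then show "flow (Xminus a \<epsilon>) t_minus P = Q" and "flow (Xplus a \<epsilon>) t_plus P = Q"
      by (simp_all add: P_def Q_def t_minus_def t_plus_def flow_Xminus flow_Xplus assms(1)
          orbit_minus_return orbit_plus_return)
  qed
  moreover have "h (flow (Xminus a \<epsilon>) t P) < 0" if "0 < t" and "t < t_minus" for t
    using h_orbit_minus_neg[OF assms(2-4) that[unfolded t_minus_def]]
    by (simp add: P_def flow_Xminus assms(1))
  moreover have "0 < h (flow (Xplus a \<epsilon>) t P)" if "0 < t" and "t < t_plus" for t
    using h_orbit_plus_pos[OF assms(2) that[unfolded t_plus_def]]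
    by (simp add: P_def flow_Xplus assms(1))
  ultimately show ?thesis
    unfolding has_pseudo_orbit_def between0_def
    by (intro exI[of _ P] exI[of _ Q] exI[of _ t_minus] exI[of _ t_plus]) auto
qed

lemma has_pseudo_orbit_if_square_bounds:
  assumes "a\<^sup>2 < 2 * \<epsilon>\<^sup>2" and "\<epsilon>\<^sup>2 < a\<^sup>2"
  shows "has_pseudo_orbit (Xminus a \<epsilon>) (Xplus a \<epsilon>)"
proof -
  have "0 < \<epsilon>\<^sup>2" and "a \<noteq> 0"
    using assms zero_le_power2[of a] by auto
  then have "1 < a\<^sup>2 / \<epsilon>\<^sup>2" and "a\<^sup>2 / \<epsilon>\<^sup>2 < 2"
    using assms by (simp_all add: less_divide_eq divide_less_eq)
  define r where "r = sqrt (a\<^sup>2 / \<epsilon>\<^sup>2 - 1)"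
  show ?thesis
  proof (rule has_pseudo_orbitI)
    show "a * (\<epsilon> / a) = \<epsilon>" using \<open>a \<noteq> 0\<close> by simp
    show "(\<epsilon> / a)\<^sup>2 * (1 + r\<^sup>2) = 1"
      using \<open>0 < \<epsilon>\<^sup>2\<close> \<open>1 < a\<^sup>2 / \<epsilon>\<^sup>2\<close> \<open>a \<noteq> 0\<close> by (simp add: r_def power_divide)
    show "0 < r" and "r < 1"
      using \<open>1 < a\<^sup>2 / \<epsilon>\<^sup>2\<close> \<open>a\<^sup>2 / \<epsilon>\<^sup>2 < 2\<close> by (simp_all add: r_def)
  qed
qed

theorem theorem1:
  fixes a \<epsilon> :: real
  assumes "(\<bar>a\<bar> / sqrt 2 < \<epsilon> \<and> \<epsilon> < \<bar>a\<bar>) \<or> (- \<bar>a\<bar> < \<epsilon> \<and> \<epsilon> < - \<bar>a\<bar> / sqrt 2)"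
  shows "has_pseudo_orbit (Xminus a \<epsilon>) (Xplus a \<epsilon>)"
proof -
  define k where "k = \<bar>a\<bar> / sqrt 2"
  have "0 \<le> k" by (simp add: k_def)
  moreover have "(k < \<epsilon> \<and> \<epsilon> < \<bar>a\<bar>) \<or> (- \<bar>a\<bar> < \<epsilon> \<and> \<epsilon> < - k)"
    using assms by (simp add: k_def)
  ultimately have "k < \<bar>\<epsilon>\<bar>" and "\<bar>\<epsilon>\<bar> < \<bar>a\<bar>" by (auto simp: abs_if)
  have "k\<^sup>2 < \<bar>\<epsilon>\<bar>\<^sup>2"
    using \<open>k < \<bar>\<epsilon>\<bar>\<close> \<open>0 \<le> k\<close> by (rule power_strict_mono) simp
  moreover have "\<bar>\<epsilon>\<bar>\<^sup>2 < \<bar>a\<bar>\<^sup>2"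
    using \<open>\<bar>\<epsilon>\<bar> < \<bar>a\<bar>\<close> by (rule power_strict_mono) simp_all
  ultimately show ?thesis
    by (intro has_pseudo_orbit_if_square_bounds) (simp_all add: k_def power_divide)
qed

end
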